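(* Let $\mathcal X,\mathcal U$ be finite nonempty sets, $f:\mathcal X\times\mathcal U\to\mathcal X$ and $g:\mathcal X\to\mathbb R$. Let $v_{\mathrm A}^*(x)=\max_{\mathbf u\in\mathbb U}\min_{\tau\in\mathbb N} g(\xi_x^{\mathbf u}(\tau))$. Then there is a policy $\pi\in\Pi$ such that $v_{\mathrm A}^*(x)=\min_{\tau\in\mathbb N} g(\xi_x^\pi(\tau))$ for all $x\in\mathcal X$.
   Context: $\mathbb N=\{0,1,\dots\}$; $\Pi$ is the set of maps $\mathcal X\to\mathcal U$; $\mathbb U$ is the set of sequences $\mathbb N\to\mathcal U$. For $\pi\in\Pi$: $\xi_x^\pi(0)=x$, $\xi_x^\pi(t+1)=f(\xi_x^\pi(t),\pi(\xi_x^\pi(t)))$. For $\mathbf u\in\mathbb U$: $\xi_x^{\mathbf u}(0)=x$, $\xi_x^{\mathbf u}(t+1)=f(\xi_x^{\mathbf u}(t),\mathbf u(t))$. *)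

theory Defs
  imports "HOL-Analysis.Analysis"
begin

primrec traj_pol :: "('x \<Rightarrow> 'u \<Rightarrow> 'x) \<Rightarrow> ('x \<Rightarrow> 'u) \<Rightarrow> 'x \<Rightarrow> nat \<Rightarrow> 'x" where
  "traj_pol f p x 0 = x"
| "traj_pol f p x (Suc t) = f (traj_pol f p x t) (p (traj_pol f p x t))"

primrec traj_seq :: "('x \<Rightarrow> 'u \<Rightarrow> 'x) \<Rightarrow> (nat \<Rightarrow> 'u) \<Rightarrow> 'x \<Rightarrow> nat \<Rightarrow> 'x" where
  "traj_seq f u x 0 = x"
| "traj_seq f u x (Suc t) = f (traj_seq f u x t) (u t)"

text \<open>v_A^*(x) = max over input sequences of min over times of g along the trajectory.
  Both min and max are over finite sets of values since the state space is finite.\<close>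
definition vA :: "('x::finite \<Rightarrow> 'u \<Rightarrow> 'x) \<Rightarrow> ('x \<Rightarrow> real) \<Rightarrow> 'x \<Rightarrow> real" where
  "vA f g x = Max ((\<lambda>u. Min (range (\<lambda>\<tau>. g (traj_seq f u x \<tau>)))) ` (UNIV :: (nat \<Rightarrow> 'u) set))"

end

theory Submission
  imports Defs
begin

text \<open>Pick for every state an optimal input sequence and let the policy play its first input.
  The tail of that sequence, started at the successor state, is at least as good, so
  \<open>vA\<close> never decreases along closed-loop trajectories; since \<open>vA \<le> g\<close>, the closed-loop
  payoff is at least \<open>vA\<close>. Conversely, a closed-loop trajectory is an open-loop one.\<close>

lemma traj_seq_Suc_shift:
  "traj_seq f u x (Suc t) = traj_seq f (\<lambda>n. u (Suc n)) (f x (u 0)) t"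
  by (induction t) auto

lemma traj_seq_traj_pol: "traj_seq f (\<lambda>t. p (traj_pol f p x t)) x = traj_pol f p x"
proof
  show "traj_seq f (\<lambda>t. p (traj_pol f p x t)) x t = traj_pol f p x t" for t
    by (induction t) auto
qed

lemma le_traj_pol_if_nondecreasing:
  fixes v g :: "'x \<Rightarrow> 'a::preorder"
  assumes le_g: "\<And>x. v x \<le> g x" and step: "\<And>x. v x \<le> v (f x (p x))"
  shows "v x \<le> g (traj_pol f p x t)"
proof -
  have "v x \<le> v (traj_pol f p x t)"
  proof (induction t)
    case (Suc t)
    then show ?case using step[of "traj_pol f p x t"] order_trans by auto
  qed simp
  then show ?thesis using le_g order_trans by blast
qed

definition seq_payoff :: "('x::finite \<Rightarrow> 'u \<Rightarrow> 'x) \<Rightarrow> ('x \<Rightarrow> 'a::linorder) \<Rightarrow> (nat \<Rightarrow> 'u) \<Rightarrow> 'x \<Rightarrow> 'a" where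
  "seq_payoff f g u x = Min (range (\<lambda>\<tau>. g (traj_seq f u x \<tau>)))"

lemma finite_range_comp_finite:
  fixes h :: "'b \<Rightarrow> 'x::finite"
  shows "finite (range (\<lambda>\<tau>. g (h \<tau>)))"
  by (rule finite_range_imageI) simp

lemma seq_payoff_le: "seq_payoff f g u x \<le> g (traj_seq f u x t)"
  unfolding seq_payoff_def by (rule Min_le[OF finite_range_comp_finite]) auto

lemma seq_payoff_in_range: "seq_payoff f g u x \<in> range g"
proof -
  have "seq_payoff f g u x \<in> range (\<lambda>\<tau>. g (traj_seq f u x \<tau>))"
    unfolding seq_payoff_def by (rule Min_in[OF finite_range_comp_finite]) auto
  then show ?thesis by auto
qed

lemma seq_payoff_le_Suc_shift:
  "seq_payoff f g u x \<le> seq_payoff f g (\<lambda>n. u (Suc n)) (f x (u 0))"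
  unfolding seq_payoff_def[of f g "\<lambda>n. u (Suc n)"]
proof (rule Min.boundedI[OF finite_range_comp_finite])
  fix a assume "a \<in> range (\<lambda>\<tau>. g (traj_seq f (\<lambda>n. u (Suc n)) (f x (u 0)) \<tau>))"
  then obtain t where "a = g (traj_seq f u x (Suc t))"
    by (auto simp only: traj_seq_Suc_shift)
  then show "seq_payoff f g u x \<le> a"
    using seq_payoff_le[of f g u x "Suc t"] by (simp only:)
qed simp

lemma finite_seq_payoffs: "finite (range (\<lambda>u. seq_payoff f g u x))"
  by (rule finite_subset[of _ "range g"]) (auto intro: seq_payoff_in_range)

lemma vA_eq_Max_seq_payoff: "vA f g x = Max (range (\<lambda>u. seq_payoff f g u x))"
  unfolding vA_def seq_payoff_def ..

lemma seq_payoff_le_vA: "seq_payoff f g u x \<le> vA f g x"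
  unfolding vA_eq_Max_seq_payoff by (rule Max_ge[OF finite_seq_payoffs]) auto

lemma vA_attained: "\<exists>u. vA f g x = seq_payoff f g u x"
proof -
  have "vA f g x \<in> range (\<lambda>u. seq_payoff f g u x)"
    unfolding vA_eq_Max_seq_payoff by (rule Max_in[OF finite_seq_payoffs]) auto
  then show ?thesis by auto
qed

lemma vA_le: "vA f g x \<le> g x"
proof -
  obtain u where "vA f g x = seq_payoff f g u x"
    using vA_attained by blast
  also have "\<dots> \<le> g (traj_seq f u x 0)"
    by (rule seq_payoff_le)
  finally show ?thesis by simp
qed

lemma vA_le_vA_successor: "\<exists>a. vA f g x \<le> vA f g (f x a)"
proof -
  obtain u where "vA f g x = seq_payoff f g u x"
    using vA_attained by blast
  also have "\<dots> \<le> seq_payoff f g (\<lambda>n. u (Suc n)) (f x (u 0))"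
    by (rule seq_payoff_le_Suc_shift)
  also have "\<dots> \<le> vA f g (f x (u 0))"
    by (rule seq_payoff_le_vA)
  finally show ?thesis ..
qed

theorem mainTheorem3:
  fixes f :: "'x::finite \<Rightarrow> 'u::finite \<Rightarrow> 'x" and g :: "'x \<Rightarrow> real"
  shows "\<exists>p :: 'x \<Rightarrow> 'u. \<forall>x. vA f g x = Min (range (\<lambda>\<tau>. g (traj_pol f p x \<tau>)))"
proof -
  obtain p :: "'x \<Rightarrow> 'u" where step: "\<And>x. vA f g x \<le> vA f g (f x (p x))"
    using vA_le_vA_successor[of f g] by metis
  have "vA f g x = Min (range (\<lambda>\<tau>. g (traj_pol f p x \<tau>)))" for x
  proof (rule antisym)
    show "vA f g x \<le> Min (range (\<lambda>\<tau>. g (traj_pol f p x \<tau>)))"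
      by (rule Min.boundedI[OF finite_range_comp_finite])
         (auto intro: le_traj_pol_if_nondecreasing vA_le step)
    show "Min (range (\<lambda>\<tau>. g (traj_pol f p x \<tau>))) \<le> vA f g x"
      using seq_payoff_le_vA[of f g "\<lambda>t. p (traj_pol f p x t)" x]
      unfolding seq_payoff_def traj_seq_traj_pol .
  qed
  then show ?thesis by blast
qed

end
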